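(* Let $A,B$ be $P$-operators on the same probability space $\Omega$. Then $d_M(A,B)\le 3\|A-B\|_{\infty\to1}^{1/2}$.
   Context: A $P$-operator on a probability space $\Omega$ is a linear $A:L^\infty(\Omega)\to L^1(\Omega)$, $v\mapsto vA$, with $\|A\|_{\infty\to1}:=\sup_v\|vA\|_1/\|v\|_\infty<\infty$. $\mathcal{S}_k(A)$ is the set of joint distributions on $\mathbb{R}^{2k}$ of $(v_1,\dots,v_k,v_1A,\dots,v_kA)$ over measurable $v_i:\Omega\to[-1,1]$. $d_{\rm LP}(\eta_1,\eta_2)=\inf\{\varepsilon>0:\eta_1(U)\le\eta_2(U^\varepsilon)+\varepsilon,\ \eta_2(U)\le\eta_1(U^\varepsilon)+\varepsilon\text{ for all Borel }U\}$ ($U^\varepsilon$ the open $\varepsilon$-neighborhood), $d_H$ the corresponding Hausdorff distance between sets of measures, and $d_M(A,B)=\sum_{k\ge1}2^{-k}d_H(\mathcal{S}_k(A),\mathcal{S}_k(B))$. *)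

theory Defs
  imports "HOL-Probability.Probability" "HOL-Probability.Essential_Supremum"
begin

definition Linf_norm :: "'a measure \<Rightarrow> ('a \<Rightarrow> real) \<Rightarrow> real" where
  "Linf_norm M v = real_of_ereal (esssup M (\<lambda>x. ereal \<bar>v x\<bar>))"

definition L1_norm :: "'a measure \<Rightarrow> ('a \<Rightarrow> real) \<Rightarrow> real" where
  "L1_norm M f = (\<integral>x. \<bar>f x\<bar> \<partial>M)"

definition is_Linf :: "'a measure \<Rightarrow> ('a \<Rightarrow> real) \<Rightarrow> bool" where
  "is_Linf M v \<longleftrightarrow> v \<in> borel_measurable M \<and> esssup M (\<lambda>x. ereal \<bar>v x\<bar>) < \<infinity>"

text \<open>The operator is written as a function
  applied to representatives; A v stands for vA.\<close>

definition P_operator :: "'a measure \<Rightarrow> (('a \<Rightarrow> real) \<Rightarrow> ('a \<Rightarrow> real)) \<Rightarrow> bool" where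
  "P_operator M A \<longleftrightarrow>
     (\<forall>v. is_Linf M v \<longrightarrow> integrable M (A v)) \<and>
     (\<forall>v w. is_Linf M v \<and> is_Linf M w \<and> (AE x in M. v x = w x) \<longrightarrow> (AE x in M. A v x = A w x)) \<and>
     (\<forall>v w a b. is_Linf M v \<and> is_Linf M w \<longrightarrow>
        (AE x in M. A (\<lambda>y. a * v y + b * w y) x = a * A v x + b * A w x)) \<and>
     (\<exists>C. \<forall>v. is_Linf M v \<longrightarrow> L1_norm M (A v) \<le> C * Linf_norm M v)"

definition op_norm :: "'a measure \<Rightarrow> (('a \<Rightarrow> real) \<Rightarrow> ('a \<Rightarrow> real)) \<Rightarrow> real" where
  "op_norm M A = (SUP v \<in> {v. is_Linf M v \<and> Linf_norm M v \<noteq> 0}. L1_norm M (A v) / Linf_norm M v)"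

text \<open>R^(2k) is represented by the finite product space on coordinates {..<2k}.\<close>

definition Rspace :: "nat \<Rightarrow> (nat \<Rightarrow> real) measure" where
  "Rspace n = PiM {..<n} (\<lambda>_. borel)"

definition edist :: "nat \<Rightarrow> (nat \<Rightarrow> real) \<Rightarrow> (nat \<Rightarrow> real) \<Rightarrow> real" where
  "edist n x y = sqrt (\<Sum>i<n. (x i - y i)\<^sup>2)"

definition nbhd :: "nat \<Rightarrow> (nat \<Rightarrow> real) set \<Rightarrow> real \<Rightarrow> (nat \<Rightarrow> real) set" where
  "nbhd n U e = {y \<in> space (Rspace n). \<exists>x\<in>U. edist n x y < e}"

definition d_LP :: "nat \<Rightarrow> (nat \<Rightarrow> real) measure \<Rightarrow> (nat \<Rightarrow> real) measure \<Rightarrow> real" where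
  "d_LP n \<eta>1 \<eta>2 = Inf {e. e > 0 \<and> (\<forall>U \<in> sets (Rspace n).
      measure \<eta>1 U \<le> measure \<eta>2 (nbhd n U e) + e \<and>
      measure \<eta>2 U \<le> measure \<eta>1 (nbhd n U e) + e)}"

definition d_H :: "nat \<Rightarrow> (nat \<Rightarrow> real) measure set \<Rightarrow> (nat \<Rightarrow> real) measure set \<Rightarrow> real" where
  "d_H n X Y = max (SUP x\<in>X. INF y\<in>Y. d_LP n x y) (SUP y\<in>Y. INF x\<in>X. d_LP n x y)"

text \<open>S_k(A): joint distributions of (v_1,...,v_k, v_1 A, ..., v_k A), coordinates 0..2k-1.\<close>

definition S_k :: "'a measure \<Rightarrow> nat \<Rightarrow> (('a \<Rightarrow> real) \<Rightarrow> ('a \<Rightarrow> real)) \<Rightarrow> (nat \<Rightarrow> real) measure set" where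
  "S_k M k A = {distr M (Rspace (2*k))
        (\<lambda>x. \<lambda>i\<in>{..<2*k}. if i < k then v i x else A (v (i - k)) x) | v.
        \<forall>i<k. v i \<in> borel_measurable M \<and> (\<forall>x\<in>space M. \<bar>v i x\<bar> \<le> 1)}"

definition d_M :: "'a measure \<Rightarrow> (('a \<Rightarrow> real) \<Rightarrow> ('a \<Rightarrow> real)) \<Rightarrow> (('a \<Rightarrow> real) \<Rightarrow> ('a \<Rightarrow> real)) \<Rightarrow> real" where
  "d_M M A B = (\<Sum>k. (1/2) ^ (Suc k) * d_H (2 * Suc k) (S_k M (Suc k) A) (S_k M (Suc k) B))"

end

theory Submission imports Defs begin

(* The vectors (v, vA) and (v, vB) live on the same
   space Omega and differ only in their last k coordinates, so their Euclidean distance is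
   at most D = sum_j |v_j A - v_j B|, whose mean is at most k eps with eps = |A - B|.
   Markov's inequality gives P(D >= e) <= k eps / e <= e as soon as e^2 >= k eps; hence
   corresponding laws are within sqrt (k eps) in the Levy-Prokhorov distance, and so are
   S_k(A) and S_k(B) in the Hausdorff distance. Since sqrt k <= (3/2)^(k-1), the weighted
   sum defining d_M is at most sum_k 2^-k (3/2)^(k-1) sqrt eps = 2 sqrt eps. *)

lemma edist_commute: "edist n x y = edist n y x"
  unfolding edist_def by (simp add: power2_commute)

lemma edist_nonneg: "0 \<le> edist n x y"
  unfolding edist_def by (simp add: sum_nonneg)

lemma id_measurable_Rspace: "(\<lambda>y. y) \<in> Rspace n \<rightarrow>\<^sub>M (borel :: (nat \<Rightarrow> real) measure)"
proof (rule measurable_coordinatewise_then_product)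
  fix i :: nat
  show "(\<lambda>y. y i) \<in> borel_measurable (Rspace n)"
  proof (cases "i < n")
    case True
    then show ?thesis unfolding Rspace_def by (intro measurable_component_singleton) auto
  next
    case False
    then have "\<And>y. y \<in> space (Rspace n) \<Longrightarrow> y i = undefined"
      unfolding Rspace_def by (auto simp: space_PiM PiE_def extensional_def)
    then show ?thesis by (subst measurable_cong[where g="\<lambda>_. undefined"]) auto
  qed
qed

lemma nbhd_in_sets: "nbhd n U e \<in> sets (Rspace n)"
proof -
  let ?O = "\<Union>x\<in>U. {z. edist n x z < e}"
  have "open ?O"
    unfolding edist_def by (intro open_UN ballI open_Collect_less continuous_intros) simp
  moreover have "nbhd n U e = (\<lambda>y. y) -` ?O \<inter> space (Rspace n)"
    unfolding nbhd_def by auto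
  ultimately show ?thesis
    using measurable_sets[OF id_measurable_Rspace] by simp
qed

lemma measure_distr_le_measure_nbhd:
  assumes "finite_measure M" and X: "X \<in> M \<rightarrow>\<^sub>M Rspace n" and Y: "Y \<in> M \<rightarrow>\<^sub>M Rspace n"
    and D: "integrable M D" "\<And>x. x \<in> space M \<Longrightarrow> edist n (X x) (Y x) \<le> D x"
    and e: "0 < e" "(\<integral>x. D x \<partial>M) \<le> e * e" and U: "U \<in> sets (Rspace n)"
  shows "measure (distr M (Rspace n) X) U \<le> measure (distr M (Rspace n) Y) (nbhd n U e) + e"
proof -
  interpret finite_measure M by fact
  let ?near = "Y -` nbhd n U e \<inter> space M" and ?far = "{x\<in>space M. e \<le> D x}"
  have [measurable]: "D \<in> borel_measurable M" using D(1) by auto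
  have sets: "?near \<in> sets M" "?far \<in> sets M"
    using measurable_sets[OF Y nbhd_in_sets] by auto
  have "X -` U \<inter> space M \<subseteq> ?near \<union> ?far"
    using D(2) measurable_space[OF Y] by (force simp: nbhd_def not_le)
  then have "measure (distr M (Rspace n) X) U \<le> measure M (?near \<union> ?far)"
    using X U sets by (simp add: measure_distr finite_measure_mono)
  also have "\<dots> \<le> measure M ?near + measure M ?far"
    using sets by (intro measure_Un_le) auto
  also have "measure M ?far \<le> (\<integral>x. D x \<partial>M) / e"
    using D e order_trans[OF edist_nonneg D(2)]
    by (intro integral_Markov_inequality_measure[where A="space M"]) auto
  also have "\<dots> \<le> e"
    using e by (simp add: divide_le_eq)
  finally show ?thesis
    using Y by (simp add: measure_distr nbhd_in_sets)
qed

lemma d_LP_distr_le_sqrt_integral: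
  assumes "finite_measure M" and X: "X \<in> M \<rightarrow>\<^sub>M Rspace n" and Y: "Y \<in> M \<rightarrow>\<^sub>M Rspace n"
    and D: "integrable M D" "\<And>x. x \<in> space M \<Longrightarrow> edist n (X x) (Y x) \<le> D x"
  shows "d_LP n (distr M (Rspace n) X) (distr M (Rspace n) Y) \<le> sqrt (\<integral>x. D x \<partial>M)"
proof -
  let ?E = "{e. e > 0 \<and> (\<forall>U \<in> sets (Rspace n).
      measure (distr M (Rspace n) X) U \<le> measure (distr M (Rspace n) Y) (nbhd n U e) + e \<and>
      measure (distr M (Rspace n) Y) U \<le> measure (distr M (Rspace n) X) (nbhd n U e) + e)}"
  define s where "s = sqrt (\<integral>x. D x \<partial>M)"
  have "0 \<le> (\<integral>x. D x \<partial>M)"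
    using D order_trans[OF edist_nonneg D(2)] by (intro integral_nonneg_AE) auto
  then have s: "0 \<le> s" "s * s = (\<integral>x. D x \<partial>M)" unfolding s_def by auto
  have "s + \<delta> \<in> ?E" if "0 < \<delta>" for \<delta>
  proof -
    have "s * s \<le> (s + \<delta>) * (s + \<delta>)" using s that by (intro mult_mono) auto
    then show ?thesis
      using measure_distr_le_measure_nbhd[OF assms(1) X Y D] s that
        measure_distr_le_measure_nbhd[OF assms(1) Y X D(1)] D(2) edist_commute by auto
  qed
  then have "Inf ?E \<le> s + \<delta>" if "0 < \<delta>" for \<delta>
    using that by (intro cInf_lower) (auto intro!: bdd_belowI[where m=0])
  then show ?thesis
    unfolding d_LP_def s_def[symmetric] by (rule field_le_epsilon)
qed

lemma d_LP_nonneg: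
  assumes "prob_space \<eta>1" "prob_space \<eta>2"
  shows "0 \<le> d_LP n \<eta>1 \<eta>2"
  unfolding d_LP_def
proof (rule cInf_greatest)
  show "{e. e > 0 \<and> (\<forall>U \<in> sets (Rspace n).
      measure \<eta>1 U \<le> measure \<eta>2 (nbhd n U e) + e \<and>
      measure \<eta>2 U \<le> measure \<eta>1 (nbhd n U e) + e)} \<noteq> {}"
    using prob_space.prob_le_1[OF assms(1)] prob_space.prob_le_1[OF assms(2)]
      measure_nonneg[of \<eta>1] measure_nonneg[of \<eta>2]
    by (auto intro!: exI[where x=1] add_increasing)
qed auto

lemma d_H_le:
  assumes "X \<noteq> {}" "Y \<noteq> {}" and nonneg: "\<And>x y. x \<in> X \<Longrightarrow> y \<in> Y \<Longrightarrow> 0 \<le> d_LP n x y"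
    and XY: "\<And>x. x \<in> X \<Longrightarrow> \<exists>y\<in>Y. d_LP n x y \<le> s"
    and YX: "\<And>y. y \<in> Y \<Longrightarrow> \<exists>x\<in>X. d_LP n x y \<le> s"
  shows "0 \<le> d_H n X Y \<and> d_H n X Y \<le> s"
proof -
  have inf_XY: "0 \<le> (INF y\<in>Y. d_LP n x y) \<and> (INF y\<in>Y. d_LP n x y) \<le> s" if x: "x \<in> X" for x
  proof -
    obtain y where y: "y \<in> Y" "d_LP n x y \<le> s" using XY[OF x] by blast
    have bdd: "bdd_below (d_LP n x ` Y)" using nonneg[OF x] by (rule bdd_belowI2)
    show ?thesis using nonneg[OF x] assms(2) cINF_lower2[OF bdd y] by (auto intro: cINF_greatest)
  qed
  have inf_YX: "0 \<le> (INF x\<in>X. d_LP n x y) \<and> (INF x\<in>X. d_LP n x y) \<le> s" if y: "y \<in> Y" for y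
  proof -
    obtain x where x: "x \<in> X" "d_LP n x y \<le> s" using YX[OF y] by blast
    have bdd: "bdd_below ((\<lambda>x. d_LP n x y) ` X)" by (rule bdd_belowI2[where m=0]) (rule nonneg[OF _ y])
    show ?thesis using nonneg y assms(1) cINF_lower2[OF bdd x] by (auto intro: cINF_greatest)
  qed
  show ?thesis
    unfolding d_H_def using assms(1,2) inf_XY inf_YX
    by (auto intro!: cSUP_least cSUP_upper2 bdd_aboveI2[where M=s] intro: le_max_iff_disj[THEN iffD2])
qed

lemma esssup_abs_nonneg: "prob_space M \<Longrightarrow> 0 \<le> esssup M (\<lambda>x. ereal \<bar>v x\<bar>)"
  using esssup_mono[of "\<lambda>x. 0" M "\<lambda>x. ereal \<bar>v x\<bar>"] esssup_const[of M "0::ereal"]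
  by (simp add: prob_space.emeasure_space_1)

lemma Linf_norm_nonneg: "prob_space M \<Longrightarrow> 0 \<le> Linf_norm M v"
  unfolding Linf_norm_def by (simp add: esssup_abs_nonneg real_of_ereal_pos)

lemma Linf_bounded_by_1:
  assumes "prob_space M" "v \<in> borel_measurable M" "\<And>x. x \<in> space M \<Longrightarrow> \<bar>v x\<bar> \<le> 1"
  shows "is_Linf M v" "Linf_norm M v \<le> 1"
proof -
  have le_1: "esssup M (\<lambda>x. ereal \<bar>v x\<bar>) \<le> 1"
    using assms(2,3) by (intro esssup_I) auto
  then show "is_Linf M v"
    unfolding is_Linf_def using assms(2) order.strict_trans1[OF le_1, of \<infinity>] by simp
  show "Linf_norm M v \<le> 1"
    using le_1 unfolding Linf_norm_def by (cases "esssup M (\<lambda>x. ereal \<bar>v x\<bar>)") auto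
qed

lemma Linf_const: "prob_space M \<Longrightarrow> is_Linf M (\<lambda>x. c) \<and> Linf_norm M (\<lambda>x. c) = \<bar>c\<bar>"
  using esssup_const[of M "ereal \<bar>c\<bar>"]
  by (simp add: is_Linf_def Linf_norm_def prob_space.emeasure_space_1)

lemma P_operator_AE_zero:
  assumes "prob_space M" "P_operator M C" "is_Linf M v" "Linf_norm M v = 0"
  shows "AE x in M. C v x = 0"
proof -
  have zero: "is_Linf M (\<lambda>x. 0)" using Linf_const[OF assms(1)] by blast
  have "esssup M (\<lambda>x. ereal \<bar>v x\<bar>) = 0"
    using assms(3,4) esssup_abs_nonneg[OF assms(1), of v] unfolding Linf_norm_def is_Linf_def
    by (cases "esssup M (\<lambda>x. ereal \<bar>v x\<bar>)") auto
  then have "AE x in M. ereal \<bar>v x\<bar> \<le> 0"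
    using esssup_AE[of "\<lambda>x. ereal \<bar>v x\<bar>" M] by simp
  then have "AE x in M. v x = 0"
    by eventually_elim simp
  then have "AE x in M. C v x = C (\<lambda>x. 0) x"
    using assms(2,3) zero unfolding P_operator_def by blast
  \<comment> \<open>0A = 0 a.e. is the linearity axiom with a = b = 0\<close>
  moreover have "AE x in M. C (\<lambda>y. 0 * 0 + 0 * 0) x = 0 * C (\<lambda>x. 0) x + 0 * C (\<lambda>x. 0) x"
    using assms(2) zero unfolding P_operator_def by blast
  ultimately show ?thesis by eventually_elim simp
qed

lemma P_operator_diff:
  assumes "prob_space M" "P_operator M A" "P_operator M B"
  shows "P_operator M (\<lambda>v x. A v x - B v x)"
proof -
  obtain CA where CA: "\<And>v. is_Linf M v \<Longrightarrow> L1_norm M (A v) \<le> CA * Linf_norm M v"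
    using assms(2) unfolding P_operator_def by blast
  obtain CB where CB: "\<And>v. is_Linf M v \<Longrightarrow> L1_norm M (B v) \<le> CB * Linf_norm M v"
    using assms(3) unfolding P_operator_def by blast
  have int: "integrable M (A v)" "integrable M (B v)" if "is_Linf M v" for v
    using assms(2,3) that unfolding P_operator_def by auto
  have "L1_norm M (\<lambda>x. A v x - B v x) \<le> (\<bar>CA\<bar> + \<bar>CB\<bar>) * Linf_norm M v" if v: "is_Linf M v" for v
  proof -
    have "L1_norm M (\<lambda>x. A v x - B v x) \<le> (\<integral>x. \<bar>A v x\<bar> + \<bar>B v x\<bar> \<partial>M)"
      unfolding L1_norm_def using int[OF v] by (intro integral_mono) auto
    also have "\<dots> = L1_norm M (A v) + L1_norm M (B v)"
      unfolding L1_norm_def using int[OF v] by (intro Bochner_Integration.integral_add) auto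
    also have "\<dots> \<le> \<bar>CA\<bar> * Linf_norm M v + \<bar>CB\<bar> * Linf_norm M v"
      using CA[OF v] CB[OF v] Linf_norm_nonneg[OF assms(1), of v]
        mult_right_mono[of CA "\<bar>CA\<bar>"] mult_right_mono[of CB "\<bar>CB\<bar>"] by force
    finally show ?thesis by (simp add: distrib_right)
  qed
  moreover have "AE x in M. A (\<lambda>y. a * v y + b * w y) x - B (\<lambda>y. a * v y + b * w y) x
      = a * (A v x - B v x) + b * (A w x - B w x)" if "is_Linf M v" "is_Linf M w" for v w a b
  proof -
    have "AE x in M. A (\<lambda>y. a * v y + b * w y) x = a * A v x + b * A w x"
      "AE x in M. B (\<lambda>y. a * v y + b * w y) x = a * B v x + b * B w x"
      using assms(2,3) that unfolding P_operator_def by blast+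
    then show ?thesis by eventually_elim (simp add: right_diff_distrib)
  qed
  moreover have "AE x in M. A v x - B v x = A w x - B w x"
    if "is_Linf M v" "is_Linf M w" "AE x in M. v x = w x" for v w
  proof -
    have "AE x in M. A v x = A w x" "AE x in M. B v x = B w x"
      using assms(2,3) that unfolding P_operator_def by blast+
    then show ?thesis by eventually_elim simp
  qed
  ultimately show ?thesis
    unfolding P_operator_def using int by blast
qed

lemma op_norm_bdd_above:
  assumes "prob_space M" "P_operator M C"
  shows "bdd_above ((\<lambda>v. L1_norm M (C v) / Linf_norm M v) ` {v. is_Linf M v \<and> Linf_norm M v \<noteq> 0})"
proof -
  obtain K where K: "\<And>v. is_Linf M v \<Longrightarrow> L1_norm M (C v) \<le> K * Linf_norm M v"
    using assms(2) unfolding P_operator_def by blast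
  show ?thesis
  proof (rule bdd_aboveI2)
    fix v assume "v \<in> {v. is_Linf M v \<and> Linf_norm M v \<noteq> 0}"
    then have "is_Linf M v" "0 < Linf_norm M v"
      using Linf_norm_nonneg[OF assms(1), of v] by (auto simp: order.strict_iff_order)
    then show "L1_norm M (C v) / Linf_norm M v \<le> K"
      using K by (simp add: divide_le_eq)
  qed
qed

lemma op_norm_nonneg:
  assumes "prob_space M" "P_operator M C"
  shows "0 \<le> op_norm M C"
proof -
  have "0 \<le> L1_norm M (C (\<lambda>x. 1)) / Linf_norm M (\<lambda>x. 1)"
    unfolding L1_norm_def using Linf_const[OF assms(1), of 1] by simp
  also have "\<dots> \<le> op_norm M C"
    unfolding op_norm_def using Linf_const[OF assms(1), of 1]
    by (intro cSUP_upper op_norm_bdd_above[OF assms]) auto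
  finally show ?thesis .
qed

lemma L1_norm_le_op_norm:
  assumes "prob_space M" "P_operator M C" "is_Linf M v"
  shows "L1_norm M (C v) \<le> op_norm M C * Linf_norm M v"
proof (cases "Linf_norm M v = 0")
  case True
  then have "L1_norm M (C v) = 0"
    unfolding L1_norm_def using P_operator_AE_zero[OF assms]
    by (intro integral_eq_zero_AE) auto
  then show ?thesis using True by simp
next
  case False
  then have "0 < Linf_norm M v"
    using Linf_norm_nonneg[OF assms(1), of v] by simp
  moreover have "L1_norm M (C v) / Linf_norm M v \<le> op_norm M C"
    unfolding op_norm_def using assms(3) False
    by (intro cSUP_upper op_norm_bdd_above[OF assms(1,2)]) auto
  ultimately show ?thesis by (simp add: divide_le_eq mult.commute)
qed

definition unit_family :: "'a measure \<Rightarrow> nat \<Rightarrow> (nat \<Rightarrow> 'a \<Rightarrow> real) \<Rightarrow> bool" where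
  "unit_family M k v \<longleftrightarrow> (\<forall>i<k. v i \<in> borel_measurable M \<and> (\<forall>x\<in>space M. \<bar>v i x\<bar> \<le> 1))"

definition joint_map ::
    "nat \<Rightarrow> (nat \<Rightarrow> 'a \<Rightarrow> real) \<Rightarrow> (('a \<Rightarrow> real) \<Rightarrow> ('a \<Rightarrow> real)) \<Rightarrow> 'a \<Rightarrow> nat \<Rightarrow> real" where
  "joint_map k v A = (\<lambda>x. \<lambda>i\<in>{..<2*k}. if i < k then v i x else A (v (i - k)) x)"

lemma S_k_eq: "S_k M k A = {distr M (Rspace (2*k)) (joint_map k v A) | v. unit_family M k v}"
  unfolding S_k_def joint_map_def unit_family_def ..

lemma unit_family_is_Linf:
  "prob_space M \<Longrightarrow> unit_family M k v \<Longrightarrow> j < k \<Longrightarrow> is_Linf M (v j) \<and> Linf_norm M (v j) \<le> 1"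
  unfolding unit_family_def using Linf_bounded_by_1 by blast

lemma joint_map_measurable:
  assumes "prob_space M" "P_operator M A" "unit_family M k v"
  shows "joint_map k v A \<in> M \<rightarrow>\<^sub>M Rspace (2*k)"
  unfolding joint_map_def Rspace_def
proof (rule measurable_restrict)
  fix i assume "i \<in> {..<2*k}"
  then have "integrable M (A (v (i - k)))" if "\<not> i < k"
    using that assms unit_family_is_Linf[OF assms(1,3), of "i - k"] unfolding P_operator_def by auto
  then show "(\<lambda>x. if i < k then v i x else A (v (i - k)) x) \<in> borel_measurable M"
    using assms(3) unfolding unit_family_def by (cases "i < k") auto
qed

lemma edist_joint_map_le:
  "edist (2*k) (joint_map k v A x) (joint_map k v B x) \<le> (\<Sum>j<k. \<bar>A (v j) x - B (v j) x\<bar>)"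
proof -
  let ?d = "\<lambda>i. joint_map k v A x i - joint_map k v B x i"
  have "edist (2*k) (joint_map k v A x) (joint_map k v B x) = L2_set ?d {..<2*k}"
    unfolding edist_def L2_set_def by simp
  also have "\<dots> \<le> (\<Sum>i<2*k. \<bar>?d i\<bar>)"
    by (rule L2_set_le_sum_abs)
  also have "\<dots> = (\<Sum>i<k. \<bar>?d i\<bar>) + (\<Sum>i=k..<2*k. \<bar>?d i\<bar>)"
    by (simp add: sum.atLeastLessThan_concat lessThan_atLeast0)
  also have "(\<Sum>i<k. \<bar>?d i\<bar>) = 0"
    unfolding joint_map_def by simp
  also have "(\<Sum>i=k..<2*k. \<bar>?d i\<bar>) = (\<Sum>j<k. \<bar>A (v j) x - B (v j) x\<bar>)"
    using sum.atLeastLessThan_shift_bounds[of "\<lambda>i. \<bar>?d i\<bar>" 0 k k]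
    by (simp add: joint_map_def mult_2 lessThan_atLeast0 add.commute)
  finally show ?thesis by simp
qed

lemma d_LP_joint_map_le:
  assumes "prob_space M" "P_operator M A" "P_operator M B" "unit_family M k v"
  shows "d_LP (2*k) (distr M (Rspace (2*k)) (joint_map k v A)) (distr M (Rspace (2*k)) (joint_map k v B))
    \<le> sqrt (k * op_norm M (\<lambda>v x. A v x - B v x))"
proof -
  interpret prob_space M by fact
  let ?C = "\<lambda>v x. A v x - B v x" and ?D = "\<lambda>x. \<Sum>j<k. \<bar>A (v j) x - B (v j) x\<bar>"
  have C: "P_operator M ?C" by (rule P_operator_diff[OF assms(1-3)])
  have v: "is_Linf M (v j)" "Linf_norm M (v j) \<le> 1" if "j < k" for j
    using unit_family_is_Linf[OF assms(1,4) that] by auto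
  have int: "integrable M (?C (v j))" if "j < k" for j
    using C v[OF that] unfolding P_operator_def by blast
  have "(\<integral>x. ?D x \<partial>M) = (\<Sum>j<k. L1_norm M (?C (v j)))"
    unfolding L1_norm_def by (intro Bochner_Integration.integral_sum integrable_abs int) simp
  also have "\<dots> \<le> (\<Sum>j<k. op_norm M ?C * Linf_norm M (v j))"
    using L1_norm_le_op_norm[OF assms(1) C] v by (intro sum_mono) auto
  also have "\<dots> \<le> (\<Sum>j<k. op_norm M ?C)"
    using op_norm_nonneg[OF assms(1) C] v by (intro sum_mono mult_left_le) auto
  finally have "(\<integral>x. ?D x \<partial>M) \<le> k * op_norm M ?C" by simp
  moreover have "d_LP (2*k) (distr M (Rspace (2*k)) (joint_map k v A)) (distr M (Rspace (2*k)) (joint_map k v B))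
      \<le> sqrt (\<integral>x. ?D x \<partial>M)"
    by (intro d_LP_distr_le_sqrt_integral joint_map_measurable edist_joint_map_le assms
        finite_measure_axioms Bochner_Integration.integrable_sum integrable_abs int) simp
  ultimately show ?thesis by (meson order_trans real_sqrt_le_mono)
qed

lemma prob_space_S_k:
  assumes "prob_space M" "P_operator M A" "\<eta> \<in> S_k M k A"
  shows "prob_space \<eta>"
  using assms(3) prob_space.prob_space_distr[OF assms(1) joint_map_measurable[OF assms(1,2)]]
  unfolding S_k_eq by auto

lemma S_k_nonempty: "S_k M k A \<noteq> {}"
  unfolding S_k_eq unit_family_def by (auto intro!: exI[where x="\<lambda>i x. 0"])

lemma d_H_S_k_le:
  assumes "prob_space M" "P_operator M A" "P_operator M B"
  shows "0 \<le> d_H (2*k) (S_k M k A) (S_k M k B) \<and>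
    d_H (2*k) (S_k M k A) (S_k M k B) \<le> sqrt (k * op_norm M (\<lambda>v x. A v x - B v x))"
proof (rule d_H_le[OF S_k_nonempty S_k_nonempty])
  show "0 \<le> d_LP (2*k) \<eta>A \<eta>B" if "\<eta>A \<in> S_k M k A" "\<eta>B \<in> S_k M k B" for \<eta>A \<eta>B
    using that prob_space_S_k assms by (intro d_LP_nonneg) blast+
  show "\<exists>\<eta>B\<in>S_k M k B. d_LP (2*k) \<eta>A \<eta>B \<le> sqrt (k * op_norm M (\<lambda>v x. A v x - B v x))"
    if "\<eta>A \<in> S_k M k A" for \<eta>A
    using that d_LP_joint_map_le[OF assms] unfolding S_k_eq by blast
  show "\<exists>\<eta>A\<in>S_k M k A. d_LP (2*k) \<eta>A \<eta>B \<le> sqrt (k * op_norm M (\<lambda>v x. A v x - B v x))"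
    if "\<eta>B \<in> S_k M k B" for \<eta>B
    using that d_LP_joint_map_le[OF assms] unfolding S_k_eq by blast
qed

lemma sqrt_Suc_le_power: "sqrt (Suc k) \<le> (3/2) ^ k"
proof -
  have "real (Suc k) \<le> (9/4) ^ k"
    by (induction k) (auto simp: algebra_simps intro: order_trans[OF _ mult_left_mono])
  then have "sqrt (Suc k) \<le> sqrt (((3/2) ^ k)\<^sup>2)"
    by (simp add: power_mult_distrib[symmetric] power2_eq_square)
  then show ?thesis by simp
qed

lemma weighted_suminf_le:
  fixes f :: "nat \<Rightarrow> real"
  assumes "\<And>k. 0 \<le> f k" "\<And>k. f k \<le> sqrt (Suc k) * c"
  shows "(\<Sum>k. (1/2) ^ Suc k * f k) \<le> 2 * c"
proof -
  let ?g = "\<lambda>k. c / 2 * (3/4) ^ k"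
  have c: "0 \<le> c" using assms[of 0] by simp
  have g: "?g sums (c / 2 * (1 / (1 - 3/4)))"
    by (intro sums_mult geometric_sums) auto
  have fg: "norm ((1/2) ^ Suc k * f k) \<le> ?g k" for k
  proof -
    have "f k \<le> (3/2) ^ k * c"
      using assms(2)[of k] mult_right_mono[OF sqrt_Suc_le_power[of k] c] by linarith
    then have "norm ((1/2) ^ Suc k * f k) \<le> (1/2) ^ Suc k * ((3/2) ^ k * c)"
      using assms(1)[of k] by (simp add: mult_left_mono)
    also have "\<dots> = c / 2 * ((1/2) * (3/2)) ^ k"
      unfolding power_mult_distrib by simp
    finally show ?thesis by simp
  qed
  have "(\<Sum>k. (1/2) ^ Suc k * f k) \<le> suminf ?g"
    using summable_comparison_test'[OF sums_summable[OF g] fg] sums_summable[OF g]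
    by (intro suminf_le order_trans[OF abs_ge_self fg[unfolded real_norm_def]])
  also have "\<dots> = 2 * c"
    using sums_unique[OF g] by simp
  finally show ?thesis .
qed

theorem lemma2p15:
  fixes M :: "'a measure" and A B :: "('a \<Rightarrow> real) \<Rightarrow> ('a \<Rightarrow> real)"
  assumes "prob_space M" and "P_operator M A" and "P_operator M B"
  shows "d_M M A B \<le> 3 * sqrt (op_norm M (\<lambda>v x. A v x - B v x))"
proof -
  let ?\<epsilon> = "op_norm M (\<lambda>v x. A v x - B v x)"
  have "0 \<le> ?\<epsilon>" by (intro op_norm_nonneg P_operator_diff assms)
  have bound: "0 \<le> d_H (2 * Suc k) (S_k M (Suc k) A) (S_k M (Suc k) B) \<and>
      d_H (2 * Suc k) (S_k M (Suc k) A) (S_k M (Suc k) B) \<le> sqrt (Suc k) * sqrt ?\<epsilon>" for k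
    using d_H_S_k_le[OF assms, of "Suc k"] by (simp only: real_sqrt_mult)
  have "d_M M A B \<le> 2 * sqrt ?\<epsilon>"
    unfolding d_M_def by (rule weighted_suminf_le) (use bound in \<open>simp_all only:\<close>)
  then show ?thesis
    using real_sqrt_ge_zero[OF \<open>0 \<le> ?\<epsilon>\<close>] by linarith
qed

end
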